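(* Let $n\ge3$, let $e_1,\dots,e_n\ge1$ be integers, let $p$ be a prime with $p>\max\{e_1,\dots,e_n\}$, and let $R$ be a nonzero $\mathbf F_p$-algebra (commutative, unital). If $\max\{e_1,\dots,e_n\}>1$, then $G_{R,n;e_1,\dots,e_n}$ contains an elementary abelian $p$-group of infinite rank; in particular it is infinite.
   Context: For distinct $i,j$, $e\ge0$, $r\in R$: $\alpha_{i;j}^{(e)}(r)\in\mathrm{Aut}(R[x_1,\dots,x_n])$ maps $x_i\mapsto x_i+rx_j^e$ and fixes $x_\ell$ for $\ell\ne i$. $G_{R,n;e_1,\dots,e_n}$ is the subgroup generated by $\{\alpha_{i;i+1}^{(e_i)}(r): 1\le i\le n, r\in R\}$, indices modulo $n$. *)

theory Defs
  imports "HOL-Library.Poly_Mapping" "HOL-Computational_Algebra.Primes"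
begin

text \<open>Multivariate polynomials over a commutative ring 'r in the variables x_0, x_1, ...:
  a monomial is a finitely supported exponent vector, a polynomial a
  finitely supported coefficient function on monomials (convolution product from Poly_Mapping).\<close>

type_synonym 'r mpoly = "(nat \<Rightarrow>\<^sub>0 nat) \<Rightarrow>\<^sub>0 'r"

definition MConst :: "'r::comm_ring_1 \<Rightarrow> 'r mpoly" where
  "MConst c = Poly_Mapping.single 0 c"

definition MVar :: "nat \<Rightarrow> 'r::comm_ring_1 mpoly" where
  "MVar i = Poly_Mapping.single (Poly_Mapping.single i 1) 1"

definition subst :: "(nat \<Rightarrow> 'r::comm_ring_1 mpoly) \<Rightarrow> 'r mpoly \<Rightarrow> 'r mpoly" where
  "subst s p = (\<Sum>mon\<in>Poly_Mapping.keys p. MConst (Poly_Mapping.lookup p mon) * (\<Prod>v\<in>Poly_Mapping.keys mon. (s v) ^ (Poly_Mapping.lookup mon v)))"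

definition alpha :: "nat \<Rightarrow> nat \<Rightarrow> nat \<Rightarrow> 'r::comm_ring_1 \<Rightarrow> 'r mpoly \<Rightarrow> 'r mpoly" where
  "alpha i j e r = subst (\<lambda>l. if l = i then MVar i + MConst r * MVar j ^ e else MVar l)"

text \<open>Generators of G_{R,n;e}, with indices 0..n-1 (cyclically, i+1 taken mod n).\<close>
definition gens :: "nat \<Rightarrow> (nat \<Rightarrow> nat) \<Rightarrow> ('r::comm_ring_1 mpoly \<Rightarrow> 'r mpoly) set" where
  "gens n e = {alpha i (Suc i mod n) (e i) r | i r. i < n}"

inductive_set gen_group :: "('a \<Rightarrow> 'a) set \<Rightarrow> ('a \<Rightarrow> 'a) set" for S where
  gen_id: "id \<in> gen_group S"
| gen_mult: "g \<in> S \<Longrightarrow> f \<in> gen_group S \<Longrightarrow> g \<circ> f \<in> gen_group S"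
| gen_inv: "g \<in> S \<Longrightarrow> f \<in> gen_group S \<Longrightarrow> inv g \<circ> f \<in> gen_group S"

definition G_group :: "nat \<Rightarrow> (nat \<Rightarrow> nat) \<Rightarrow> ('r::comm_ring_1 mpoly \<Rightarrow> 'r mpoly) set" where
  "G_group n e = gen_group (gens n e)"

definition elem_abelian_p_group :: "nat \<Rightarrow> ('a \<Rightarrow> 'a) set \<Rightarrow> bool" where
  "elem_abelian_p_group p H \<longleftrightarrow>
     H \<noteq> {} \<and> (\<forall>h\<in>H. bij h) \<and>
     (\<forall>f\<in>H. \<forall>g\<in>H. f \<circ> g \<in> H) \<and> (\<forall>h\<in>H. inv h \<in> H) \<and>
     (\<forall>f\<in>H. \<forall>g\<in>H. f \<circ> g = g \<circ> f) \<and> (\<forall>h\<in>H. h ^^ p = id)"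

end

theory Submission
  imports Defs
begin

text \<open>
  For f free of x_0 the automorphisms x_0 \<mapsto> x_0 + f compose by adding the f's, so those lying
  in G form an elementary abelian p-group, and it suffices to find infinitely many of them.

  Conjugating x_i \<mapsto> x_i + c x_j^a by x_j \<mapsto> x_j + r h gives x_i \<mapsto> x_i + c (x_j + r h)^a.
  The finite-difference identity \<Sum>_r (-1)^r (a choose r) (x + r y)^a = (-1)^a a! y^a, in which a!
  is a unit because a < p, combines these into x_i \<mapsto> x_i + c h^a. Walking backwards around the
  cycle from x_0 \<mapsto> x_0 + c x_1^(e_0) to index 2 gives x_2 \<mapsto> x_2 + c x_1^D with
  D = e_2 \<cdots> e_(n-1) e_0. Conjugating x_0 \<mapsto> x_0 + c x_1^(e_0) alternately by
  x_1 \<mapsto> x_1 + x_2^(e_1) and x_2 \<mapsto> x_2 + x_1^D then gives x_0 \<mapsto> x_0 + c Q_k^(e_0), where Q_k is the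
  image of x_1 under k such Henon-type steps. As e_1 D = \<Prod>e_i \<ge> 2, the degree of Q_k for the
  weights 2 e_1 on x_1 and 3 on x_2 increases strictly with k, so the Q_k are pairwise distinct.
\<close>

section \<open>Substitution is a ring homomorphism\<close>

definition subst_monom :: "(nat \<Rightarrow> 'r::comm_ring_1 mpoly) \<Rightarrow> (nat \<Rightarrow>\<^sub>0 nat) \<Rightarrow> 'r mpoly" where
  "subst_monom s m = (\<Prod>v\<in>Poly_Mapping.keys m. s v ^ Poly_Mapping.lookup m v)"

lemma subst_eq_sum_monom:
  "subst s p = (\<Sum>m\<in>Poly_Mapping.keys p. MConst (Poly_Mapping.lookup p m) * subst_monom s m)"
  by (simp add: subst_def subst_monom_def)

lemma MConst_0 [simp]: "MConst 0 = 0"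
  by (simp add: MConst_def)

lemma MConst_1 [simp]: "MConst 1 = 1"
  by (simp add: MConst_def)

lemma MConst_add: "MConst (a + b) = MConst a + MConst b"
  by (simp add: MConst_def single_add)

lemma MConst_mult: "MConst (a * b) = MConst a * MConst b"
  by (simp add: MConst_def mult_single)

lemma MConst_uminus: "MConst (- a) = - MConst a"
  by (simp add: MConst_def single_uminus)

lemma MConst_of_nat: "MConst (of_nat k) = of_nat k"
  by (simp add: MConst_def)

lemma MConst_power: "MConst (a ^ k) = MConst a ^ k"
  by (induction k) (simp_all add: MConst_mult)

lemma subst_monom_superset:
  assumes "finite V" "Poly_Mapping.keys m \<subseteq> V"
  shows "subst_monom s m = (\<Prod>v\<in>V. s v ^ Poly_Mapping.lookup m v)"
  unfolding subst_monom_def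
  by (rule prod.mono_neutral_left) (use assms in \<open>auto simp: in_keys_iff\<close>)

lemma subst_monom_add: "subst_monom s (a + b) = subst_monom s a * subst_monom s b"
proof -
  let ?V = "Poly_Mapping.keys a \<union> Poly_Mapping.keys b"
  have "subst_monom s (a + b) = (\<Prod>v\<in>?V. s v ^ Poly_Mapping.lookup (a + b) v)"
    by (rule subst_monom_superset) (auto dest: subsetD[OF keys_add])
  also have "\<dots> = (\<Prod>v\<in>?V. s v ^ Poly_Mapping.lookup a v * s v ^ Poly_Mapping.lookup b v)"
    by (simp add: lookup_add power_add)
  also have "\<dots> = subst_monom s a * subst_monom s b"
    by (simp add: prod.distrib subst_monom_superset[of ?V])
  finally show ?thesis .
qed

lemma subst_monom_zero [simp]: "subst_monom s 0 = 1"
  by (simp add: subst_monom_def)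

lemma subst_superset:
  assumes "finite S" "Poly_Mapping.keys p \<subseteq> S"
  shows "subst s p = (\<Sum>m\<in>S. MConst (Poly_Mapping.lookup p m) * subst_monom s m)"
  unfolding subst_eq_sum_monom
  by (rule sum.mono_neutral_left) (use assms in \<open>auto simp: in_keys_iff\<close>)

lemma subst_add: "subst s (p + q) = subst s p + subst s q"
proof -
  let ?S = "Poly_Mapping.keys p \<union> Poly_Mapping.keys q"
  have "subst s (p + q) = (\<Sum>m\<in>?S. MConst (Poly_Mapping.lookup (p + q) m) * subst_monom s m)"
    by (rule subst_superset) (auto dest: subsetD[OF keys_add])
  also have "\<dots> = subst s p + subst s q"
    by (simp add: lookup_add MConst_add distrib_right sum.distrib subst_superset[of ?S])
  finally show ?thesis .
qed

lemma subst_zero [simp]: "subst s 0 = 0"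
  by (simp add: subst_def)

lemma subst_sum: "subst s (\<Sum>i\<in>I. f i) = (\<Sum>i\<in>I. subst s (f i))"
  by (induction I rule: infinite_finite_induct) (auto simp: subst_add)

lemma subst_single: "subst s (Poly_Mapping.single m c) = MConst c * subst_monom s m"
  by (simp add: subst_def subst_monom_def)

lemma sum_single_lookup: "(\<Sum>m\<in>Poly_Mapping.keys p. Poly_Mapping.single m (Poly_Mapping.lookup p m)) = p"
proof (rule poly_mapping_eqI)
  fix k
  have "Poly_Mapping.lookup (\<Sum>m\<in>Poly_Mapping.keys p. Poly_Mapping.single m (Poly_Mapping.lookup p m)) k
      = (\<Sum>m\<in>Poly_Mapping.keys p. if m = k then Poly_Mapping.lookup p m else 0)"
    by (simp add: lookup_sum lookup_single when_def)
  also have "\<dots> = Poly_Mapping.lookup p k"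
    by (simp add: sum.delta in_keys_iff)
  finally show "Poly_Mapping.lookup (\<Sum>m\<in>Poly_Mapping.keys p. Poly_Mapping.single m (Poly_Mapping.lookup p m)) k
      = Poly_Mapping.lookup p k" .
qed

lemma subst_mult: "subst s (p * q) = subst s p * subst s q"
proof -
  have "p * q = (\<Sum>a\<in>Poly_Mapping.keys p. Poly_Mapping.single a (Poly_Mapping.lookup p a))
      * (\<Sum>b\<in>Poly_Mapping.keys q. Poly_Mapping.single b (Poly_Mapping.lookup q b))"
    by (simp add: sum_single_lookup)
  also have "\<dots> = (\<Sum>a\<in>Poly_Mapping.keys p. \<Sum>b\<in>Poly_Mapping.keys q.
      Poly_Mapping.single (a + b) (Poly_Mapping.lookup p a * Poly_Mapping.lookup q b))"
    by (simp add: sum_product mult_single)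
  finally have "subst s (p * q) = (\<Sum>a\<in>Poly_Mapping.keys p. \<Sum>b\<in>Poly_Mapping.keys q.
      MConst (Poly_Mapping.lookup p a) * subst_monom s a * (MConst (Poly_Mapping.lookup q b) * subst_monom s b))"
    by (simp add: subst_sum subst_single subst_monom_add MConst_mult mult_ac)
  also have "\<dots> = subst s p * subst s q"
    unfolding subst_eq_sum_monom sum_distrib_left sum_distrib_right by (rule sum.swap)
  finally show ?thesis .
qed

lemma subst_MConst [simp]: "subst s (MConst c) = MConst c"
  by (simp add: MConst_def subst_single)

lemma subst_one [simp]: "subst s 1 = 1"
  using subst_MConst[of s 1] by simp

lemma subst_MVar [simp]: "subst s (MVar i) = s i"
  by (simp add: MVar_def subst_single subst_monom_def)

lemma subst_power: "subst s (p ^ k) = subst s p ^ k"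
  by (induction k) (simp_all add: subst_mult)

lemma subst_uminus: "subst s (- p) = - subst s p"
  using subst_add[of s "- p" p] by (simp add: eq_neg_iff_add_eq_0)

lemma subst_diff: "subst s (p - q) = subst s p - subst s q"
  by (simp only: diff_conv_add_uminus subst_add subst_uminus)

lemma subst_prod: "subst s (\<Prod>i\<in>I. f i) = (\<Prod>i\<in>I. subst s (f i))"
  by (induction I rule: infinite_finite_induct) (auto simp: subst_mult)

lemma subst_subst: "subst s (subst t p) = subst (\<lambda>v. subst s (t v)) p"
  unfolding subst_eq_sum_monom[of t p] subst_eq_sum_monom[of "\<lambda>v. subst s (t v)" p]
  by (simp add: subst_sum subst_mult subst_monom_def subst_prod subst_power)

lemma subst_comp_subst: "subst s \<circ> subst t = subst (\<lambda>v. subst s (t v))"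
  by (rule ext) (simp add: subst_subst)

lemma MVar_power: "MVar v ^ k = Poly_Mapping.single (Poly_Mapping.single v k) (1::'r::comm_ring_1)"
  by (induction k) (simp_all add: MVar_def mult_single single_add[symmetric] add.commute)

lemma subst_monom_MVar: "subst_monom MVar m = Poly_Mapping.single m (1::'r::comm_ring_1)"
proof -
  have prod_single: "(\<Prod>v\<in>V. Poly_Mapping.single (f v) (1::'r)) = Poly_Mapping.single (\<Sum>v\<in>V. f v) 1"
    for V and f :: "nat \<Rightarrow> nat \<Rightarrow>\<^sub>0 nat"
    by (induction V rule: infinite_finite_induct) (auto simp: mult_single)
  have "subst_monom MVar m = (\<Prod>v\<in>Poly_Mapping.keys m.
      Poly_Mapping.single (Poly_Mapping.single v (Poly_Mapping.lookup m v)) (1::'r))"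
    by (simp add: subst_monom_def MVar_power)
  also have "\<dots> = Poly_Mapping.single m 1"
    by (simp add: prod_single sum_single_lookup)
  finally show ?thesis .
qed

lemma subst_MVar_eq_id: "subst MVar = id"
  by (rule ext) (simp add: subst_eq_sum_monom MConst_def mult_single subst_monom_MVar sum_single_lookup)

lemma subst_cong:
  assumes "\<And>m v. m \<in> Poly_Mapping.keys p \<Longrightarrow> v \<in> Poly_Mapping.keys m \<Longrightarrow> s v = t v"
  shows "subst s p = subst t p"
  unfolding subst_def using assms by (intro sum.cong refl arg_cong2[where f = "(*)"] prod.cong) auto

definition var_free :: "nat \<Rightarrow> 'r::comm_ring_1 mpoly \<Rightarrow> bool" where
  "var_free i p \<longleftrightarrow> (\<forall>m\<in>Poly_Mapping.keys p. Poly_Mapping.lookup m i = 0)"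

lemma var_free_zero [simp]: "var_free i 0"
  by (simp add: var_free_def)

lemma var_free_MConst [simp]: "var_free i (MConst c)"
  by (simp add: var_free_def MConst_def)

lemma var_free_MVar [simp]: "j \<noteq> i \<Longrightarrow> var_free i (MVar j)"
  by (simp add: var_free_def MVar_def lookup_single)

lemma var_free_add [simp]: "var_free i p \<Longrightarrow> var_free i q \<Longrightarrow> var_free i (p + q)"
  unfolding var_free_def by (metis Un_iff keys_add subsetD)

lemma var_free_mult [simp]:
  assumes "var_free i p" "var_free i q"
  shows "var_free i (p * q)"
  unfolding var_free_def
proof
  fix m assume "m \<in> Poly_Mapping.keys (p * q)"
  then obtain a b where "m = a + b" "a \<in> Poly_Mapping.keys p" "b \<in> Poly_Mapping.keys q"
    using keys_mult[of p q] by blast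
  then show "Poly_Mapping.lookup m i = 0"
    using assms by (simp add: var_free_def lookup_add)
qed

lemma var_free_uminus [simp]: "var_free i p \<Longrightarrow> var_free i (- p)"
  by (simp add: var_free_def)

lemma var_free_one [simp]: "var_free i 1"
  using var_free_MConst[of i 1] by simp

lemma var_free_of_nat [simp]: "var_free i (of_nat k)"
  using var_free_MConst[of i "of_nat k"] by (simp only: MConst_of_nat)

lemma var_free_power [simp]: "var_free i p \<Longrightarrow> var_free i (p ^ k)"
  by (induction k) simp_all

lemma var_free_sum: "(\<And>x. x \<in> A \<Longrightarrow> var_free i (f x)) \<Longrightarrow> var_free i (\<Sum>x\<in>A. f x)"
  by (induction A rule: infinite_finite_induct) auto

lemma var_free_prod: "(\<And>x. x \<in> A \<Longrightarrow> var_free i (f x)) \<Longrightarrow> var_free i (\<Prod>x\<in>A. f x)"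
  by (induction A rule: infinite_finite_induct) auto

lemma var_free_subst:
  assumes "var_free i p" "\<And>v. v \<noteq> i \<Longrightarrow> var_free i (s v)"
  shows "var_free i (subst s p)"
  unfolding subst_def
proof (rule var_free_sum)
  fix m assume "m \<in> Poly_Mapping.keys p"
  then have "v \<in> Poly_Mapping.keys m \<Longrightarrow> v \<noteq> i" for v
    using assms(1) by (auto simp: var_free_def in_keys_iff)
  then show "var_free i (MConst (Poly_Mapping.lookup p m)
      * (\<Prod>v\<in>Poly_Mapping.keys m. s v ^ Poly_Mapping.lookup m v))"
    using assms(2) by (intro var_free_mult var_free_MConst var_free_prod var_free_power) auto
qed

lemma subst_var_free:
  assumes "var_free i p" "\<And>v. v \<noteq> i \<Longrightarrow> s v = MVar v"
  shows "subst s p = p"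
proof -
  have "subst s p = subst MVar p"
  proof (rule subst_cong)
    fix m v assume "m \<in> Poly_Mapping.keys p" "v \<in> Poly_Mapping.keys m"
    then have "v \<noteq> i" using assms(1) by (auto simp: var_free_def in_keys_iff)
    then show "s v = MVar v" using assms(2) by simp
  qed
  then show ?thesis by (simp add: subst_MVar_eq_id)
qed

section \<open>Elementary automorphisms\<close>

definition elementary_subst :: "nat \<Rightarrow> 'r::comm_ring_1 mpoly \<Rightarrow> nat \<Rightarrow> 'r mpoly" where
  "elementary_subst i f = (\<lambda>l. if l = i then MVar i + f else MVar l)"

definition elementary :: "nat \<Rightarrow> 'r::comm_ring_1 mpoly \<Rightarrow> 'r mpoly \<Rightarrow> 'r mpoly" where
  "elementary i f = subst (elementary_subst i f)"

lemma alpha_eq_elementary: "alpha i j e r = elementary i (MConst r * MVar j ^ e)"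
  by (simp add: alpha_def elementary_def elementary_subst_def)

lemma elementary_var_free: "var_free i p \<Longrightarrow> elementary i f p = p"
  unfolding elementary_def by (rule subst_var_free) (auto simp: elementary_subst_def)

lemma elementary_MVar_same: "elementary i f (MVar i) = MVar i + f"
  by (simp add: elementary_def elementary_subst_def)

lemma elementary_monom_same:
  "elementary j h (MConst c * MVar j ^ a) = MConst c * (MVar j + h) ^ a"
  by (simp add: elementary_def elementary_subst_def subst_mult subst_power)

lemma elementary_zero: "elementary i 0 = id"
proof -
  have "elementary_subst i 0 = MVar" by (auto simp: elementary_subst_def)
  then show ?thesis by (metis elementary_def subst_MVar_eq_id)
qed

lemma elementary_comp:
  assumes "var_free i g"
  shows "elementary i f \<circ> elementary i g = elementary i (f + g)"
proof -
  have "subst (elementary_subst i f) (elementary_subst i g v) = elementary_subst i (f + g) v" for v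
    using elementary_var_free[OF assms, of f]
    by (simp add: elementary_def elementary_subst_def subst_add add.assoc)
  then show ?thesis by (simp add: elementary_def subst_comp_subst)
qed

lemma elementary_conj:
  assumes "i \<noteq> j" "var_free i h" "var_free j h" "var_free i f"
  shows "elementary j h \<circ> elementary i f \<circ> elementary j (- h) = elementary i (elementary j h f)"
proof -
  have "subst (elementary_subst j h) (subst (elementary_subst i f) (elementary_subst j (- h) v))
      = elementary_subst i (elementary j h f) v" for v
    using assms elementary_var_free[of i h f] elementary_var_free[of j h h]
    by (auto simp: elementary_subst_def elementary_def subst_add subst_diff)
  moreover have "elementary j h \<circ> elementary i f \<circ> elementary j (- h)
      = subst (\<lambda>v. subst (elementary_subst j h) (subst (elementary_subst i f) (elementary_subst j (- h) v)))"
    by (rule ext) (simp add: elementary_def subst_subst)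
  ultimately show ?thesis by (simp add: elementary_def)
qed

lemma elementary_inj: "elementary i f = elementary i g \<Longrightarrow> f = g"
  by (metis add_left_cancel elementary_MVar_same)

lemma elementary_pow: "var_free i f \<Longrightarrow> elementary i f ^^ k = elementary i (of_nat k * f)"
  by (induction k) (simp_all add: elementary_zero elementary_comp distrib_right)

lemma elementary_inv:
  assumes "var_free i f"
  shows "bij (elementary i f)" "inv (elementary i f) = elementary i (- f)"
proof -
  have "elementary i (- f) \<circ> elementary i f = id" "elementary i f \<circ> elementary i (- f) = id"
    using assms by (simp_all add: elementary_comp elementary_zero)
  then show "bij (elementary i f)" "inv (elementary i f) = elementary i (- f)"
    by (auto intro: o_bij inv_unique_comp)
qed

lemma gen_group_comp:
  assumes "f \<in> gen_group S" "g \<in> gen_group S"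
  shows "f \<circ> g \<in> gen_group S"
  using assms(1)
proof (induction rule: gen_group.induct)
  case gen_id
  then show ?case using assms(2) by simp
next
  case (gen_mult h f)
  then show ?case by (metis comp_assoc gen_group.gen_mult)
next
  case (gen_inv h f)
  then show ?case by (metis comp_assoc gen_group.gen_inv)
qed

lemma gen_group_gen: "g \<in> S \<Longrightarrow> g \<in> gen_group S"
  using gen_group.gen_mult[OF _ gen_group.gen_id] by simp

lemma gen_group_funpow: "f \<in> gen_group S \<Longrightarrow> f ^^ k \<in> gen_group S"
  by (induction k) (metis funpow.simps(1) gen_group.gen_id, metis funpow.simps(2) gen_group_comp)

lemma elementary_sum_in_gen_group:
  fixes N :: nat
  assumes "\<And>r. r < N \<Longrightarrow> elementary i (f r) \<in> gen_group S" "\<And>r. r < N \<Longrightarrow> var_free i (f r)"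
  shows "elementary i (\<Sum>r<N. f r) \<in> gen_group S"
  using assms
proof (induction N)
  case 0
  then show ?case by (metis elementary_zero gen_group.gen_id lessThan_0 sum.empty)
next
  case (Suc N)
  have "var_free i (\<Sum>r<N. f r)"
    by (intro var_free_sum) (simp add: Suc.prems)
  then have "elementary i (\<Sum>r<Suc N. f r) = elementary i (f N) \<circ> elementary i (\<Sum>r<N. f r)"
    by (simp add: elementary_comp add.commute)
  moreover have "elementary i (f N) \<in> gen_group S" "elementary i (\<Sum>r<N. f r) \<in> gen_group S"
    using Suc by simp_all
  ultimately show ?case by (simp only: gen_group_comp)
qed

lemma elementary_conj_in_gen_group:
  assumes "i \<noteq> j" "var_free i h" "var_free j h" "var_free i f"
    and "elementary j h \<in> gen_group S" "elementary j (- h) \<in> gen_group S"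
    and "elementary i f \<in> gen_group S"
  shows "elementary i (elementary j h f) \<in> gen_group S"
  using elementary_conj[OF assms(1-4)] assms(5-7) by (metis gen_group_comp)

section \<open>Extracting powers by finite differences\<close>

definition fin_diff :: "nat \<Rightarrow> (nat \<Rightarrow> 'a::comm_ring_1) \<Rightarrow> 'a" where
  "fin_diff m g = (\<Sum>r\<le>m. (-1) ^ r * of_nat (m choose r) * g r)"

lemma fin_diff_Suc: "fin_diff (Suc m) g = fin_diff m g - fin_diff m (\<lambda>r. g (Suc r))"
proof -
  have shift: "fin_diff m g = g 0 - (\<Sum>s\<le>m. (-1) ^ s * of_nat (m choose Suc s) * g (Suc s))"
  proof -
    have "fin_diff m g = (\<Sum>r\<le>Suc m. (-1) ^ r * of_nat (m choose r) * g r)"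
      unfolding fin_diff_def by (simp add: binomial_eq_0)
    also have "\<dots> = g 0 - (\<Sum>s\<le>m. (-1) ^ s * of_nat (m choose Suc s) * g (Suc s))"
      by (subst sum.atMost_Suc_shift) (simp add: sum_negf)
    finally show ?thesis .
  qed
  have "fin_diff (Suc m) g = g 0 + (\<Sum>s\<le>m. (-1) ^ Suc s * of_nat (Suc m choose Suc s) * g (Suc s))"
    unfolding fin_diff_def by (subst sum.atMost_Suc_shift) simp
  also have "\<dots> = g 0 - (\<Sum>s\<le>m. (-1) ^ s * of_nat (m choose s) * g (Suc s))
      - (\<Sum>s\<le>m. (-1) ^ s * of_nat (m choose Suc s) * g (Suc s))"
    by (simp add: sum_subtractf sum_negf algebra_simps)
  finally show ?thesis
    unfolding shift by (simp add: fin_diff_def algebra_simps)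
qed

lemma fin_diff_of_nat_mult:
  "fin_diff (Suc m) (\<lambda>r. of_nat r * g r) = - of_nat (Suc m) * fin_diff m (\<lambda>r. g (Suc r))"
proof -
  have summand: "(-1) ^ Suc s * of_nat (Suc m choose Suc s) * (of_nat (Suc s) * g (Suc s))
      = - of_nat (Suc m) * ((-1) ^ s * of_nat (m choose s) * g (Suc s))" for s
  proof -
    have absorb: "of_nat (Suc m choose Suc s) * of_nat (Suc s) = (of_nat (Suc m) * of_nat (m choose s) :: 'a)"
      by (metis Suc_times_binomial_eq of_nat_mult)
    have regroup: "(-1) ^ Suc s * c * (u * z) = - ((-1) ^ s * z * (c * u))" for c u z :: 'a
      by (simp add: algebra_simps)
    show ?thesis
      unfolding regroup absorb by (simp add: algebra_simps)
  qed
  have "fin_diff (Suc m) (\<lambda>r. of_nat r * g r)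
      = (\<Sum>s\<le>m. (-1) ^ Suc s * of_nat (Suc m choose Suc s) * (of_nat (Suc s) * g (Suc s)))"
    unfolding fin_diff_def by (subst sum.atMost_Suc_shift) simp
  also have "\<dots> = (\<Sum>s\<le>m. - of_nat (Suc m) * ((-1) ^ s * of_nat (m choose s) * g (Suc s)))"
    by (rule sum.cong[OF refl summand])
  also have "\<dots> = - of_nat (Suc m) * fin_diff m (\<lambda>r. g (Suc r))"
    by (simp add: fin_diff_def sum_distrib_left)
  finally show ?thesis .
qed

lemma fin_diff_power:
  fixes x y :: "'a::comm_ring_1"
  assumes "k \<le> m"
  shows "fin_diff m (\<lambda>r. (x + of_nat r * y) ^ k) = (if k = m then (-1) ^ m * of_nat (fact m) * y ^ m else 0)"
  using assms
proof (induction m arbitrary: k x)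
  case 0
  then show ?case by (simp add: fin_diff_def)
next
  case (Suc m)
  have lower: "fin_diff (Suc m) (\<lambda>r. (x + of_nat r * y) ^ k) = 0" if "k \<le> m" for k x
    using Suc.IH[OF that, of x] Suc.IH[OF that, of "x + y"]
    by (simp add: fin_diff_Suc algebra_simps)
  have "fin_diff (Suc m) (\<lambda>r. (x + of_nat r * y) ^ Suc m)
      = x * fin_diff (Suc m) (\<lambda>r. (x + of_nat r * y) ^ m)
        + y * fin_diff (Suc m) (\<lambda>r. of_nat r * (x + of_nat r * y) ^ m)"
    unfolding fin_diff_def by (simp add: sum_distrib_left sum.distrib algebra_simps)
  also have "\<dots> = y * (- of_nat (Suc m) * fin_diff m (\<lambda>r. ((x + y) + of_nat r * y) ^ m))"
    unfolding lower[OF order.refl] fin_diff_of_nat_mult by (simp add: algebra_simps)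
  also have "\<dots> = (-1) ^ Suc m * of_nat (fact (Suc m)) * y ^ Suc m"
    unfolding Suc.IH[OF order.refl] by (simp add: algebra_simps)
  finally show ?case
    using lower Suc.prems by (cases "k = Suc m") auto
qed

lemma fact_dvd_one_if_char:
  assumes "prime p" "a < p" "of_nat p = (0::'r::comm_ring_1)"
  shows "(of_nat (fact a) :: 'r) dvd 1"
proof -
  have "\<not> p dvd fact a"
    using assms(1,2) by (simp add: prime_dvd_fact_iff)
  then have "coprime p (fact a)"
    using assms(1) by (intro prime_imp_coprime)
  then have "gcd (fact a) p = 1"
    by (simp add: coprime_iff_gcd_eq_1 gcd.commute)
  then have "gcd (int (fact a)) (int p) = 1"
    by (simp only: gcd_int_int_eq)
  then obtain u v :: int where "u * int (fact a) + v * int p = 1"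
    by (metis bezout_int)
  then have "of_int u * of_nat (fact a) + of_int v * of_nat p = (1::'r)"
    by (metis of_int_1 of_int_add of_int_mult of_int_of_nat_eq)
  then show ?thesis
    using assms(3) by (metis add.right_neutral dvdI mult.commute mult_zero_right)
qed

lemma elementary_power_in_gen_group:
  fixes h :: "'r::comm_ring_1 mpoly"
  assumes "i \<noteq> j" "var_free i h" "var_free j h" "(of_nat (fact a) :: 'r) dvd 1"
    and elem_i: "\<And>c. elementary i (MConst c * MVar j ^ a) \<in> gen_group S"
    and elem_j: "\<And>r. elementary j (MConst r * h) \<in> gen_group S"
  shows "elementary i (MConst c * h ^ a) \<in> gen_group S"
proof -
  obtain w :: 'r where w: "w * of_nat (fact a) = 1"
    using assms(4) by (metis dvdE mult.commute)
  define c' where "c' r = c * w * (-1) ^ a * (-1) ^ r * of_nat (a choose r)" for r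
  define F where "F r = MConst (c' r) * (MVar j + MConst (of_nat r) * h) ^ a" for r
  have "elementary i (elementary j (MConst (of_nat r) * h) (MConst (c' r) * MVar j ^ a)) \<in> gen_group S" for r
    using elem_j[of "- of_nat r"] assms(1-3)
    by (intro elementary_conj_in_gen_group elem_i elem_j) (simp_all add: MConst_uminus)
  then have "elementary i (F r) \<in> gen_group S" for r
    by (simp add: F_def elementary_monom_same)
  moreover have "var_free i (F r)" for r
    using assms(1,2) by (simp add: F_def)
  ultimately have "elementary i (\<Sum>r<Suc a. F r) \<in> gen_group S"
    by (intro elementary_sum_in_gen_group)
  moreover have "(\<Sum>r<Suc a. F r) = MConst c * h ^ a"
  proof -
    have "(\<Sum>r<Suc a. F r) = MConst (c * w * (-1) ^ a) * fin_diff a (\<lambda>r. (MVar j + of_nat r * h) ^ a)"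
      by (simp add: F_def c'_def fin_diff_def lessThan_Suc_atMost sum_distrib_left
          MConst_mult MConst_power MConst_uminus MConst_of_nat mult_ac)
    also have "\<dots> = MConst (c * (w * of_nat (fact a)) * ((-1) ^ a * (-1) ^ a)) * h ^ a"
      unfolding fin_diff_power[OF order.refl] by (simp add: MConst_mult MConst_power MConst_uminus MConst_of_nat mult_ac)
    also have "\<dots> = MConst c * h ^ a"
      by (simp add: w flip: power_add)
    finally show ?thesis .
  qed
  ultimately show ?thesis by simp
qed

section \<open>Walking around the cycle\<close>

lemma elementary_alpha_in_G_group:
  "i < n \<Longrightarrow> elementary i (MConst r * MVar (Suc i mod n) ^ e i) \<in> G_group n e"
  unfolding G_group_def by (rule gen_group_gen) (auto simp: gens_def alpha_eq_elementary)

definition cycle_exp :: "nat \<Rightarrow> (nat \<Rightarrow> nat) \<Rightarrow> nat \<Rightarrow> nat" where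
  "cycle_exp n e i = (\<Prod>l\<in>{i..<n}. e l) * e 0"

lemma elementary_x1_power_in_G_group:
  assumes "n \<ge> 3" "\<forall>i<n. (of_nat (fact (e i)) :: 'r::comm_ring_1) dvd 1" "2 \<le> i" "i \<le> n"
  shows "elementary (i mod n) (MConst (c::'r) * MVar 1 ^ cycle_exp n e i) \<in> G_group n e"
  using assms(4)
proof (induction i arbitrary: c rule: inc_induct)
  case base
  show ?case
    using elementary_alpha_in_G_group[of 0 n c e] assms(1) by (simp add: cycle_exp_def)
next
  case (step m)
  have m: "2 \<le> m" "m < n" using step.hyps assms(3) by simp_all
  define j where "j = Suc m mod n"
  have j: "j \<noteq> 1" "j \<noteq> m"
    using m assms(1) by (auto simp: j_def mod_Suc)
  have "elementary m (MConst c * (MVar 1 ^ cycle_exp n e (Suc m)) ^ e m) \<in> G_group n e"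
    unfolding G_group_def
  proof (rule elementary_power_in_gen_group[where j = j])
    show "(of_nat (fact (e m)) :: 'r) dvd 1" using assms(2) m by simp
    show "elementary m (MConst c * MVar j ^ e m) \<in> gen_group (gens n e)" for c :: 'r
      using elementary_alpha_in_G_group[OF m(2)] by (simp add: j_def G_group_def)
    show "elementary j (MConst r * MVar 1 ^ cycle_exp n e (Suc m)) \<in> gen_group (gens n e)" for r :: 'r
      using step.IH by (simp add: j_def G_group_def)
  qed (use m j in auto)
  moreover have "(MVar 1 ^ cycle_exp n e (Suc m)) ^ e m = (MVar 1 ^ cycle_exp n e m :: 'r mpoly)"
    using m by (simp add: cycle_exp_def prod.atLeast_Suc_lessThan mult_ac flip: power_mult)
  ultimately show ?case using m by simp
qed

section \<open>Weighted degrees\<close>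

definition wdeg :: "(nat \<Rightarrow> nat) \<Rightarrow> (nat \<Rightarrow>\<^sub>0 nat) \<Rightarrow> nat" where
  "wdeg w m = (\<Sum>v\<in>Poly_Mapping.keys m. Poly_Mapping.lookup m v * w v)"

definition wdeg_le :: "(nat \<Rightarrow> nat) \<Rightarrow> nat \<Rightarrow> 'r::comm_ring_1 mpoly \<Rightarrow> bool" where
  "wdeg_le w W p \<longleftrightarrow> (\<forall>m\<in>Poly_Mapping.keys p. wdeg w m \<le> W)"

definition wdeg_less :: "(nat \<Rightarrow> nat) \<Rightarrow> nat \<Rightarrow> 'r::comm_ring_1 mpoly \<Rightarrow> bool" where
  "wdeg_less w W p \<longleftrightarrow> (\<forall>m\<in>Poly_Mapping.keys p. wdeg w m < W)"

lemma wdeg_superset: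
  assumes "finite V" "Poly_Mapping.keys m \<subseteq> V"
  shows "wdeg w m = (\<Sum>v\<in>V. Poly_Mapping.lookup m v * w v)"
  unfolding wdeg_def
  by (rule sum.mono_neutral_left) (use assms in \<open>auto simp: in_keys_iff\<close>)

lemma wdeg_add: "wdeg w (a + b) = wdeg w a + wdeg w b"
proof -
  let ?V = "Poly_Mapping.keys a \<union> Poly_Mapping.keys b"
  have "wdeg w (a + b) = (\<Sum>v\<in>?V. Poly_Mapping.lookup (a + b) v * w v)"
    by (rule wdeg_superset) (auto dest: subsetD[OF keys_add])
  also have "\<dots> = wdeg w a + wdeg w b"
    by (simp add: lookup_add add_mult_distrib sum.distrib wdeg_superset[of ?V])
  finally show ?thesis .
qed

lemma wdeg_zero [simp]: "wdeg w 0 = 0"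
  by (simp add: wdeg_def)

lemma wdeg_single: "wdeg w (Poly_Mapping.single v k) = k * w v"
  by (simp add: wdeg_def)

lemma wdeg_fun_upd:
  "wdeg (w(a := c)) m + Poly_Mapping.lookup m a * w a = wdeg w m + Poly_Mapping.lookup m a * c"
proof -
  let ?V = "insert a (Poly_Mapping.keys m)"
  have "wdeg w' m = Poly_Mapping.lookup m a * w' a + (\<Sum>v\<in>?V - {a}. Poly_Mapping.lookup m v * w' v)" for w'
  proof -
    have "wdeg w' m = (\<Sum>v\<in>?V. Poly_Mapping.lookup m v * w' v)"
      by (rule wdeg_superset) auto
    also have "\<dots> = Poly_Mapping.lookup m a * w' a + (\<Sum>v\<in>?V - {a}. Poly_Mapping.lookup m v * w' v)"
      by (rule sum.remove) auto
    finally show ?thesis .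
  qed
  then show ?thesis by simp
qed

lemma lookup_mult_le_wdeg: "Poly_Mapping.lookup m a * w a \<le> wdeg w m"
  using wdeg_fun_upd[of w a 0 m] by simp

lemma wdeg_less_zero [simp]: "wdeg_less w W 0"
  by (simp add: wdeg_less_def)

lemma wdeg_le_add: "wdeg_le w W p \<Longrightarrow> wdeg_le w W q \<Longrightarrow> wdeg_le w W (p + q)"
  unfolding wdeg_le_def by (metis Un_iff keys_add subsetD)

lemma wdeg_less_add: "wdeg_less w W p \<Longrightarrow> wdeg_less w W q \<Longrightarrow> wdeg_less w W (p + q)"
  unfolding wdeg_less_def by (metis Un_iff keys_add subsetD)

lemma wdeg_le_mono: "wdeg_le w W p \<Longrightarrow> W \<le> W' \<Longrightarrow> wdeg_le w W' p"
  unfolding wdeg_le_def by force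

lemma wdeg_less_imp_le: "wdeg_less w W p \<Longrightarrow> wdeg_le w W p"
  unfolding wdeg_less_def wdeg_le_def by force

lemma wdeg_le_imp_less: "wdeg_le w W p \<Longrightarrow> W < W' \<Longrightarrow> wdeg_less w W' p"
  unfolding wdeg_less_def wdeg_le_def by force

lemma keys_mult_obtain:
  assumes "m \<in> Poly_Mapping.keys (p * q)"
  obtains a b where "m = a + b" "a \<in> Poly_Mapping.keys p" "b \<in> Poly_Mapping.keys q"
  using keys_mult[of p q] assms by blast

lemma wdeg_le_mult: "wdeg_le w W1 p \<Longrightarrow> wdeg_le w W2 q \<Longrightarrow> wdeg_le w (W1 + W2) (p * q)"
  unfolding wdeg_le_def by (auto elim!: keys_mult_obtain simp: wdeg_add intro!: add_mono)

lemma wdeg_less_mult_left: "wdeg_less w W1 p \<Longrightarrow> wdeg_le w W2 q \<Longrightarrow> wdeg_less w (W1 + W2) (p * q)"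
  unfolding wdeg_le_def wdeg_less_def
  by (auto elim!: keys_mult_obtain simp: wdeg_add intro!: add_less_le_mono)

lemma wdeg_less_mult_right: "wdeg_le w W1 p \<Longrightarrow> wdeg_less w W2 q \<Longrightarrow> wdeg_less w (W1 + W2) (p * q)"
  unfolding wdeg_le_def wdeg_less_def
  by (auto elim!: keys_mult_obtain simp: wdeg_add intro!: add_le_less_mono)

lemma wdeg_le_MConst: "wdeg_le w 0 (MConst c)"
  by (simp add: wdeg_le_def MConst_def)

lemma wdeg_le_of_nat: "wdeg_le w 0 (of_nat k)"
  using wdeg_le_MConst[of w "of_nat k"] by (simp add: MConst_of_nat)

lemma wdeg_le_MVar_power: "wdeg_le w (k * w v) (MVar v ^ k)"
  by (simp add: wdeg_le_def MVar_power wdeg_single)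

lemma wdeg_le_power: "wdeg_le w W p \<Longrightarrow> wdeg_le w (k * W) (p ^ k)"
  by (induction k) (use wdeg_le_MConst[of w 1] in \<open>simp_all add: wdeg_le_mult\<close>)

lemma wdeg_le_prod: "(\<And>x. x \<in> A \<Longrightarrow> wdeg_le w (W x) (f x)) \<Longrightarrow> wdeg_le w (\<Sum>x\<in>A. W x) (\<Prod>x\<in>A. f x)"
  by (induction A rule: infinite_finite_induct) (use wdeg_le_MConst[of w 1] in \<open>simp_all add: wdeg_le_mult\<close>)

lemma wdeg_less_sum: "(\<And>x. x \<in> A \<Longrightarrow> wdeg_less w W (f x)) \<Longrightarrow> wdeg_less w W (\<Sum>x\<in>A. f x)"
  by (induction A rule: infinite_finite_induct) (auto intro: wdeg_less_add)

lemma wdeg_less_subst: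
  assumes "\<And>v. wdeg_le w (W' v) (s v)" "\<And>m. m \<in> Poly_Mapping.keys p \<Longrightarrow> wdeg W' m < W"
  shows "wdeg_less w W (subst s p)"
  unfolding subst_def
proof (rule wdeg_less_sum)
  fix m assume "m \<in> Poly_Mapping.keys p"
  have "wdeg_le w (0 + wdeg W' m)
      (MConst (Poly_Mapping.lookup p m) * (\<Prod>v\<in>Poly_Mapping.keys m. s v ^ Poly_Mapping.lookup m v))"
    unfolding wdeg_def by (intro wdeg_le_mult wdeg_le_MConst wdeg_le_prod wdeg_le_power assms(1))
  then show "wdeg_less w W
      (MConst (Poly_Mapping.lookup p m) * (\<Prod>v\<in>Poly_Mapping.keys m. s v ^ Poly_Mapping.lookup m v))"
    using assms(2)[OF \<open>m \<in> _\<close>] by (auto intro: wdeg_le_imp_less)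
qed

section \<open>Polynomials dominated by a power of a variable\<close>

definition lead_power :: "(nat \<Rightarrow> nat) \<Rightarrow> nat \<Rightarrow> nat \<Rightarrow> 'r::comm_ring_1 mpoly \<Rightarrow> bool" where
  "lead_power w y N p \<longleftrightarrow> (\<exists>L. p = MVar y ^ N + L \<and> wdeg_less w (N * w y) L)"

lemma lead_power_MVar: "lead_power w y 1 (MVar y)"
  unfolding lead_power_def by (rule exI[of _ 0]) simp

lemma lead_power_power:
  assumes "lead_power w y N p"
  shows "lead_power w y (N * k) (p ^ k)"
proof (induction k)
  case 0
  show ?case unfolding lead_power_def by (rule exI[of _ 0]) simp
next
  case (Suc k)
  obtain L where L: "p = MVar y ^ N + L" "wdeg_less w (N * w y) L"
    using assms by (auto simp: lead_power_def)
  obtain L1 where L1: "p ^ k = MVar y ^ (N * k) + L1" "wdeg_less w (N * k * w y) L1"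
    using Suc by (auto simp: lead_power_def)
  have "p ^ Suc k = MVar y ^ (N * Suc k) + (MVar y ^ N * L1 + L * MVar y ^ (N * k) + L * L1)"
    unfolding power_Suc L1(1) by (simp add: L(1) algebra_simps power_add)
  moreover have "wdeg_less w (N * w y + N * k * w y) (MVar y ^ N * L1 + L * MVar y ^ (N * k) + L * L1)"
    by (intro wdeg_less_add wdeg_less_mult_right wdeg_less_mult_left wdeg_le_MVar_power
        L(2) L1(2) wdeg_less_imp_le)
  ultimately show ?case
    unfolding lead_power_def by (auto simp: algebra_simps)
qed

lemma lead_power_neq:
  assumes "lead_power w y N p" "lead_power w y' N' q" "N * w y < N' * w y'" "(0::'r::comm_ring_1) \<noteq> 1"
  shows "p \<noteq> (q :: 'r mpoly)"
proof
  assume "p = q"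
  let ?M = "Poly_Mapping.single y' N'"
  obtain L' where L': "q = MVar y' ^ N' + L'" "wdeg_less w (N' * w y') L'"
    using assms(2) by (auto simp: lead_power_def)
  then have "?M \<notin> Poly_Mapping.keys L'"
    by (auto simp: wdeg_less_def wdeg_single)
  then have "Poly_Mapping.lookup q ?M = 1"
    by (simp add: L'(1) lookup_add MVar_power in_keys_iff)
  obtain L where L: "p = MVar y ^ N + L" "wdeg_less w (N * w y) L"
    using assms(1) by (auto simp: lead_power_def)
  then have "wdeg_le w (N * w y) p"
    by (blast intro: wdeg_le_add wdeg_le_MVar_power wdeg_less_imp_le)
  then have "?M \<notin> Poly_Mapping.keys p"
    using assms(3) by (auto simp: wdeg_le_def wdeg_single)
  then show False
    using \<open>p = q\<close> \<open>Poly_Mapping.lookup q ?M = 1\<close> assms(4) by (simp add: in_keys_iff)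
qed

text \<open>Expanding (x_a + x_b^k)^N, only x_b^(kN) reaches the top degree because w a < k w b. In the
  substituted remainder, a monomial of degree < N w a gains at most (k w b - w a) per factor x_a,
  and it has fewer than N of them.\<close>

lemma lead_power_elementary:
  fixes p :: "'r::comm_ring_1 mpoly"
  assumes "a \<noteq> b" "0 < w a" "w a < k * w b" "N \<ge> 1" "lead_power w a N p"
  shows "lead_power w b (k * N) (elementary a (MVar b ^ k) p)"
proof -
  let ?s = "elementary_subst a (MVar b ^ k) :: nat \<Rightarrow> 'r mpoly"
  obtain L where p: "p = MVar a ^ N + L" and L: "wdeg_less w (N * w a) L"
    using assms(5) by (auto simp: lead_power_def)
  obtain N' where N': "N = Suc N'" using assms(4) by (cases N) auto
  define R where "R = (\<Sum>i\<le>N'. of_nat (N choose Suc i) * MVar a ^ Suc i * (MVar b ^ k) ^ (N - Suc i) :: 'r mpoly)"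
  have "subst ?s (MVar a ^ N) = (MVar a + MVar b ^ k) ^ N"
    by (simp add: subst_power elementary_subst_def)
  also have "\<dots> = (\<Sum>i\<le>N. of_nat (N choose i) * MVar a ^ i * (MVar b ^ k) ^ (N - i))"
    by (rule binomial_ring)
  also have "\<dots> = MVar b ^ (k * N) + R"
    unfolding R_def N' by (subst sum.atMost_Suc_shift) (simp add: mult.commute power_add flip: power_mult)
  finally have expand: "subst ?s (MVar a ^ N) = MVar b ^ (k * N) + R" .
  have R_deg: "wdeg_less w (k * N * w b) R"
    unfolding R_def
  proof (rule wdeg_less_sum)
    fix i assume "i \<in> {..N'}"
    then have "Suc i \<le> N" using N' by simp
    then have "(N - Suc i) * (k * w b) + Suc i * (k * w b) = N * (k * w b)"
      by (metis add_mult_distrib le_add_diff_inverse2)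
    moreover have "Suc i * w a < Suc i * (k * w b)" using assms(3) by (rule mult_less_mono2) simp
    ultimately have "Suc i * w a + (N - Suc i) * (k * w b) < N * (k * w b)"
      by linarith
    then have "0 + Suc i * w a + (k * (N - Suc i)) * w b < k * N * w b"
      by (simp add: mult_ac)
    then show "wdeg_less w (k * N * w b) (of_nat (N choose Suc i) * MVar a ^ Suc i * (MVar b ^ k) ^ (N - Suc i))"
      unfolding power_mult[symmetric]
      by (rule wdeg_le_imp_less[OF wdeg_le_mult[OF wdeg_le_mult[OF wdeg_le_of_nat wdeg_le_MVar_power]
          wdeg_le_MVar_power]])
  qed
  have L_deg: "wdeg_less w (k * N * w b) (subst ?s L)"
  proof (rule wdeg_less_subst[where W' = "w(a := k * w b)"])
    show "wdeg_le w ((w(a := k * w b)) v) (?s v)" for v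
      using assms(3) wdeg_le_MVar_power[of w 1] wdeg_le_MVar_power[of w k b]
      by (auto simp: elementary_subst_def intro!: wdeg_le_add intro: wdeg_le_mono less_imp_le)
  next
    fix m assume m: "m \<in> Poly_Mapping.keys L"
    let ?x = "Poly_Mapping.lookup m a"
    have "wdeg w m < N * w a" using L m by (simp add: wdeg_less_def)
    moreover have "?x * w a \<le> wdeg w m" by (rule lookup_mult_le_wdeg)
    ultimately have "?x \<le> N" by (meson le_less_trans less_imp_le mult_less_cancel2)
    then have "(N - ?x) * w a + ?x * w a = N * w a" "(N - ?x) * (k * w b) + ?x * (k * w b) = N * (k * w b)"
      by (simp_all add: add_mult_distrib[symmetric])
    moreover have "(N - ?x) * w a \<le> (N - ?x) * (k * w b)"
      using assms(3) by (intro mult_le_mono2) simp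
    moreover have "wdeg (w(a := k * w b)) m + ?x * w a = wdeg w m + ?x * (k * w b)"
      by (rule wdeg_fun_upd)
    moreover have "k * N * w b = N * (k * w b)" by simp
    ultimately show "wdeg (w(a := k * w b)) m < k * N * w b"
      using \<open>wdeg w m < N * w a\<close> \<open>?x * w a \<le> wdeg w m\<close> by linarith
  qed
  have "elementary a (MVar b ^ k) p = MVar b ^ (k * N) + (R + subst ?s L)"
    by (simp add: elementary_def p subst_add expand add.assoc)
  then show ?thesis
    unfolding lead_power_def using wdeg_less_add[OF R_deg L_deg] by blast
qed

section \<open>Iterated Henon-type maps\<close>

fun henon_iter :: "nat \<Rightarrow> nat \<Rightarrow> nat \<Rightarrow> 'r::comm_ring_1 mpoly" where
  "henon_iter D e 0 = MVar 1"
| "henon_iter D e (Suc k) =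
    (if even k then elementary 1 (MVar 2 ^ e) else elementary 2 (MVar 1 ^ D)) (henon_iter D e k)"

fun henon_deg :: "nat \<Rightarrow> nat \<Rightarrow> nat \<Rightarrow> nat" where
  "henon_deg D e 0 = 1"
| "henon_deg D e (Suc k) = (if even k then e else D) * henon_deg D e k"

definition henon_var :: "nat \<Rightarrow> nat" where
  "henon_var k = (if even k then 1 else 2)"

text \<open>Any weights with w_1 < e w_2 and w_2 < D w_1 would do; (2e, 3) works as soon as e D \<ge> 2.\<close>

definition henon_weight :: "nat \<Rightarrow> nat \<Rightarrow> nat" where
  "henon_weight e v = (if v = 1 then 2 * e else if v = 2 then 3 else 0)"

lemma henon_deg_pos: "e * D \<ge> 1 \<Longrightarrow> henon_deg D e k \<ge> 1"
  by (induction k) simp_all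

lemma lead_power_henon_iter:
  assumes "e \<ge> 1" "e * D \<ge> 2"
  shows "lead_power (henon_weight e) (henon_var k) (henon_deg D e k) (henon_iter D e k :: 'r::comm_ring_1 mpoly)"
proof (induction k)
  case 0
  show ?case using lead_power_MVar by (simp add: henon_var_def)
next
  case (Suc k)
  have "henon_deg D e k \<ge> 1"
    using assms(2) by (intro henon_deg_pos) linarith
  moreover have "3 < D * (2 * e)"
    using assms(2) mult.commute[of e D] by linarith
  ultimately show ?case
    using Suc.IH assms(1) by (auto simp: henon_var_def henon_weight_def intro: lead_power_elementary)
qed

lemma strict_mono_henon_wdeg:
  assumes "e \<ge> 1" "e * D \<ge> 2"
  shows "strict_mono (\<lambda>k. henon_deg D e k * henon_weight e (henon_var k))"
  unfolding strict_mono_Suc_iff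
proof
  fix k
  have N: "henon_deg D e k \<ge> 1"
    using assms(2) by (intro henon_deg_pos) linarith
  show "henon_deg D e k * henon_weight e (henon_var k)
      < henon_deg D e (Suc k) * henon_weight e (henon_var (Suc k))"
  proof (cases "even k")
    case True
    have "henon_deg D e k * (2 * e) < henon_deg D e k * (3 * e)" using N assms(1) by simp
    then show ?thesis using True by (simp add: henon_weight_def henon_var_def mult_ac)
  next
    case False
    have "henon_deg D e k * 3 < henon_deg D e k * (2 * (e * D))" using N assms(2) by simp
    then show ?thesis using False by (simp add: henon_weight_def henon_var_def mult_ac)
  qed
qed

lemma inj_henon_iter_power:
  assumes "e \<ge> 1" "e * D \<ge> 2" "a \<ge> 1" "(0::'r::comm_ring_1) \<noteq> 1"
  shows "inj (\<lambda>k. henon_iter D e k ^ a :: 'r mpoly)"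
proof -
  have lead: "lead_power (henon_weight e) (henon_var j) (henon_deg D e j * a) (henon_iter D e j ^ a :: 'r mpoly)" for j
    by (rule lead_power_power[OF lead_power_henon_iter[OF assms(1,2)]])
  have "henon_iter D e k ^ a \<noteq> (henon_iter D e k' ^ a :: 'r mpoly)" if "k < k'" for k k'
    using strict_monoD[OF strict_mono_henon_wdeg[OF assms(1,2)] that] assms(3)
    by (intro lead_power_neq[OF lead lead _ assms(4)]) (simp add: mult_ac)
  then show ?thesis
    by (metis (no_types, lifting) injI linorder_neqE_nat)
qed

lemma var_free_henon_iter: "var_free 0 (henon_iter D e k)"
  by (induction k) (auto simp: elementary_def elementary_subst_def intro: var_free_subst)

lemma elementary_henon_iter_in_G_group:
  assumes "n \<ge> 3" "\<forall>i<n. (of_nat (fact (e i)) :: 'r::comm_ring_1) dvd 1"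
  shows "elementary 0 (MConst (c::'r) * henon_iter (cycle_exp n e 2) (e 1) k ^ e 0) \<in> G_group n e"
proof (induction k arbitrary: c)
  case 0
  show ?case using elementary_alpha_in_G_group[of 0 n c e] assms(1) by simp
next
  case (Suc k)
  let ?Q = "henon_iter (cycle_exp n e 2) (e 1) k :: 'r mpoly"
  have conj: "elementary 0 (MConst c * elementary j h ?Q ^ e 0) \<in> G_group n e"
    if "j \<noteq> 0" "var_free 0 h" "var_free j h" "\<And>r. elementary j (MConst r * h) \<in> G_group n e" for j h
  proof -
    have "elementary 0 (elementary j h (MConst c * ?Q ^ e 0)) \<in> gen_group (gens n e)"
      using that that(4)[of 1] that(4)[of "- 1"] Suc.IH
      by (intro elementary_conj_in_gen_group) (simp_all add: G_group_def MConst_uminus var_free_henon_iter)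
    then show ?thesis
      by (simp add: G_group_def elementary_def subst_mult subst_power)
  qed
  show ?case
  proof (cases "even k")
    case True
    have G: "elementary 1 (MConst r * MVar 2 ^ e 1) \<in> G_group n e" for r :: 'r
      using elementary_alpha_in_G_group[of 1 n r e] assms(1) by (simp add: numeral_2_eq_2)
    show ?thesis
      using True conj[OF _ _ _ G] by simp
  next
    case False
    have G: "elementary 2 (MConst r * MVar 1 ^ cycle_exp n e 2) \<in> G_group n e" for r :: 'r
      using elementary_x1_power_in_G_group[OF assms, of 2] assms(1) by simp
    show ?thesis
      using False conj[OF _ _ _ G] by simp
  qed
qed

section \<open>The elementary abelian subgroup\<close>

definition elementary_part :: "('r::comm_ring_1 mpoly \<Rightarrow> 'r mpoly) set \<Rightarrow> nat \<Rightarrow> ('r mpoly \<Rightarrow> 'r mpoly) set" where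
  "elementary_part G i = {elementary i f | f. var_free i f \<and> elementary i f \<in> G}"

lemma elem_abelian_elementary_part:
  assumes "p > 0" "of_nat p = (0::'r::comm_ring_1)"
  shows "elem_abelian_p_group p (elementary_part (gen_group S) i :: ('r mpoly \<Rightarrow> 'r mpoly) set)"
proof -
  let ?H = "elementary_part (gen_group S) i :: ('r mpoly \<Rightarrow> 'r mpoly) set"
  have p: "(of_nat p :: 'r mpoly) = 0"
    using assms(2) MConst_of_nat[of p] by (metis MConst_0)
  then have p1: "(of_nat (p - 1) :: 'r mpoly) = - 1"
    using assms(1) by (simp add: of_nat_diff eq_neg_iff_add_eq_0)
  have add_mem: "elementary i (f + g) \<in> ?H"
    if "var_free i f" "var_free i g" "elementary i f \<in> gen_group S" "elementary i g \<in> gen_group S"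
    for f g :: "'r mpoly"
  proof -
    have "elementary i (f + g) \<in> gen_group S"
      using gen_group_comp[OF that(3,4)] that(2) by (simp add: elementary_comp)
    then show ?thesis
      using that(1,2) unfolding elementary_part_def by (blast intro: var_free_add)
  qed
  show ?thesis
    unfolding elem_abelian_p_group_def
  proof (intro conjI ballI)
    have "elementary i 0 = elementary i (0::'r mpoly) \<and> var_free i (0::'r mpoly) \<and> elementary i 0 \<in> gen_group S"
      using gen_group.gen_id[of S] by (simp add: elementary_zero)
    then show "?H \<noteq> {}"
      unfolding elementary_part_def by blast
  next
    fix h assume "h \<in> ?H"
    then obtain f where h: "h = elementary i f" "var_free i f" "elementary i f \<in> gen_group S"
      by (auto simp: elementary_part_def)
    show "bij h" using h by (simp add: elementary_inv)
    show "h ^^ p = id" using h by (simp add: elementary_pow p elementary_zero)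
    have "elementary i f ^^ (p - 1) = elementary i (- f)"
      unfolding elementary_pow[OF h(2)] p1 by simp
    then show "inv h \<in> ?H"
      using h gen_group_funpow[OF h(3), of "p - 1"] by (auto simp: elementary_part_def elementary_inv)
  next
    fix g h assume "g \<in> ?H" "h \<in> ?H"
    then obtain a b where g: "g = elementary i a" "var_free i a" "elementary i a \<in> gen_group S"
      and h: "h = elementary i b" "var_free i b" "elementary i b \<in> gen_group S"
      by (auto simp: elementary_part_def)
    show "g \<circ> h \<in> ?H" using add_mem[of a b] g h by (simp add: elementary_comp)
    show "g \<circ> h = h \<circ> g" using g h by (simp add: elementary_comp add.commute)
  qed
qed

lemma two_le_cycle_exp:
  assumes "n \<ge> 2" "\<forall>i<n. e i \<ge> 1" "\<exists>i<n. e i > 1"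
  shows "e 1 * cycle_exp n e 2 \<ge> 2"
proof -
  obtain i where "i < n" "e i > 1" using assms(3) by blast
  moreover have "(\<Prod>l<n. e l) > 0" using assms(2) by (intro prod_pos) (simp add: Suc_le_eq)
  ultimately have "e i \<le> (\<Prod>l<n. e l)" by (intro dvd_imp_le dvd_prodI) auto
  moreover have "e 1 * cycle_exp n e 2 = (\<Prod>l<n. e l)"
    using assms(1) by (simp add: cycle_exp_def lessThan_atLeast0 prod.atLeast_Suc_lessThan numeral_2_eq_2 mult_ac)
  ultimately show ?thesis using \<open>e i > 1\<close> by linarith
qed

theorem mainTheorem10:
  fixes n p :: nat and e :: "nat \<Rightarrow> nat"
  assumes "n \<ge> 3"
    and "\<forall>i<n. e i \<ge> 1"
    and "prime p"
    and "\<forall>i<n. e i < p"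
    and "of_nat p = (0::'r::comm_ring_1)"
    and "(0::'r) \<noteq> 1"
    and "\<exists>i<n. e i > 1"
  shows "\<exists>H \<subseteq> (G_group n e :: ('r mpoly \<Rightarrow> 'r mpoly) set).
           elem_abelian_p_group p H \<and> infinite H"
proof -
  define D where "D = cycle_exp n e 2"
  have units: "\<forall>i<n. (of_nat (fact (e i)) :: 'r) dvd 1"
    using assms(3-5) fact_dvd_one_if_char by blast
  have "e 1 * D \<ge> 2"
    unfolding D_def using assms(1,2,7) by (intro two_le_cycle_exp) simp_all
  let ?H = "elementary_part (G_group n e) 0 :: ('r mpoly \<Rightarrow> 'r mpoly) set"
  let ?F = "\<lambda>k. elementary 0 (henon_iter D (e 1) k ^ e 0) :: 'r mpoly \<Rightarrow> 'r mpoly"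
  have "range ?F \<subseteq> ?H"
    using elementary_henon_iter_in_G_group[OF assms(1) units, of 1]
    by (auto simp: elementary_part_def D_def var_free_henon_iter)
  moreover have "inj ?F"
  proof -
    have "inj (\<lambda>k. henon_iter D (e 1) k ^ e 0 :: 'r mpoly)"
      using assms(1,2) by (intro inj_henon_iter_power \<open>e 1 * D \<ge> 2\<close> assms(6)) simp_all
    then show ?thesis by (auto simp: inj_def dest: elementary_inj)
  qed
  ultimately have "infinite ?H"
    using infinite_iff_countable_subset by blast
  moreover have "elem_abelian_p_group p ?H"
    unfolding G_group_def using assms(3,5) by (intro elem_abelian_elementary_part) (simp_all add: prime_gt_0_nat)
  moreover have "?H \<subseteq> G_group n e"
    by (auto simp: elementary_part_def)
  ultimately show ?thesis by blast
qed

end
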